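(* Let $J$ be a finite-dimensional Jordan algebra over a field of characteristic different from $2$ such that every linear endomorphism of $J$ is a quasiderivation, i.e. $QDer(J)=End(J)$. Then either $J$ is a field or $J$ has zero multiplication.
   Context: A Jordan algebra is a commutative algebra satisfying $(x^2,y,x)=0$, where $(a,b,c)=(ab)c-a(bc)$. A linear map $f:J\to J$ is a quasiderivation if there exists a linear map $Q:J\to J$ with $Q(xy)=f(x)y+xf(y)$ for all $x,y\in J$; $QDer(J)$ is the set of quasiderivations and $End(J)$ the set of all linear endomorphisms of $J$. *)

theory Defs
  imports Complex_Main
begin

definition bilinear_mult :: "('k::field \<Rightarrow> 'v::ab_group_add \<Rightarrow> 'v) \<Rightarrow> ('v \<Rightarrow> 'v \<Rightarrow> 'v) \<Rightarrow> bool" where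
  "bilinear_mult sc mu \<longleftrightarrow>
     (\<forall>x. Vector_Spaces.linear sc sc (\<lambda>y. mu x y)) \<and>
     (\<forall>y. Vector_Spaces.linear sc sc (\<lambda>x. mu x y))"

definition jordan_algebra :: "('k::field \<Rightarrow> 'v::ab_group_add \<Rightarrow> 'v) \<Rightarrow> ('v \<Rightarrow> 'v \<Rightarrow> 'v) \<Rightarrow> bool" where
  "jordan_algebra sc mu \<longleftrightarrow>
     vector_space sc \<and> bilinear_mult sc mu \<and>
     (\<forall>x y. mu x y = mu y x) \<and>
     (\<forall>x y. mu (mu (mu x x) y) x = mu (mu x x) (mu y x))"

definition finite_dim :: "('k::field \<Rightarrow> 'v::ab_group_add \<Rightarrow> 'v) \<Rightarrow> bool" where
  "finite_dim sc \<longleftrightarrow> (\<exists>B. finite B \<and> module.span sc B = UNIV)"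

definition quasiderivation :: "('k::field \<Rightarrow> 'v::ab_group_add \<Rightarrow> 'v) \<Rightarrow> ('v \<Rightarrow> 'v \<Rightarrow> 'v) \<Rightarrow> ('v \<Rightarrow> 'v) \<Rightarrow> bool" where
  "quasiderivation sc mu f \<longleftrightarrow>
     Vector_Spaces.linear sc sc f \<and>
     (\<exists>Q. Vector_Spaces.linear sc sc Q \<and> (\<forall>x y. Q (mu x y) = mu (f x) y + mu x (f y)))"

definition is_field_alg :: "('v::ab_group_add \<Rightarrow> 'v \<Rightarrow> 'v) \<Rightarrow> bool" where
  "is_field_alg mu \<longleftrightarrow>
     (\<forall>x y z. mu (mu x y) z = mu x (mu y z)) \<and>
     (\<forall>x y. mu x y = mu y x) \<and>
     (\<exists>e. e \<noteq> 0 \<and> (\<forall>x. mu e x = x) \<and> (\<forall>x. x \<noteq> 0 \<longrightarrow> (\<exists>y. mu x y = e)))"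

definition zero_mult :: "('v::ab_group_add \<Rightarrow> 'v \<Rightarrow> 'v) \<Rightarrow> bool" where
  "zero_mult mu \<longleftrightarrow> (\<forall>x y. mu x y = 0)"

end

theory Submission
  imports Defs
begin

(*
  For a linear functional phi and a vector w the rank-one
  map x |-> phi(x) w is then a quasiderivation, and its companion map Q satisfies
  Q(xy) = w (phi(x) y + phi(y) x).  Two consequences drive the proof:
  (1) a nonzero element annihilating J forces the multiplication to vanish;
  (2) hence, if the multiplication is nonzero, every linear relation among products
      xy carries over to the vectors phi(x) y + phi(y) x, for every functional phi.
  Choosing phi suitably on at most two independent vectors, (2) shows (for 2 <> 0)
  that J has no zero divisors and, using the power-associativity identity
  ((xx)x)x = (xx)(xx) of Jordan algebras, that every square xx is a multiple of x.
  This yields an idempotent e, and comparing (e+y)(e+y) with the squares of e and y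
  shows that e spans J, so J is a field.
*)

lemma vector_space_field_self: "vector_space ((*) :: 'a::field \<Rightarrow> 'a \<Rightarrow> 'a)"
  by unfold_locales (simp_all add: algebra_simps)

locale comm_algebra = vector_space sc
  for sc :: "'a::field \<Rightarrow> 'b::ab_group_add \<Rightarrow> 'b" (infixr \<open>*s\<close> 75) +
  fixes mu :: "'b \<Rightarrow> 'b \<Rightarrow> 'b" (infixl \<open>\<diamond>\<close> 70)
  assumes alg_add_right: "x \<diamond> (y + z) = x \<diamond> y + x \<diamond> z"
    and alg_scale_right: "x \<diamond> (c *s y) = c *s (x \<diamond> y)"
    and alg_comm: "x \<diamond> y = y \<diamond> x"
begin

sublocale endo: vector_space_pair sc sc ..

sublocale dual: vector_space_pair sc "(*)"
  using vector_space_field_self by (simp add: vector_space_pair_def vector_space_axioms)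

lemma scale_two: "2 *s x = x + x"
  by (metis one_add_one scale_left_distrib scale_one)

lemma alg_add_left: "(x + y) \<diamond> z = x \<diamond> z + y \<diamond> z"
  by (metis alg_add_right alg_comm)

lemma alg_scale_left: "(c *s x) \<diamond> y = c *s (x \<diamond> y)"
  by (metis alg_scale_right alg_comm)

lemma alg_zero_right [simp]: "x \<diamond> 0 = 0"
  using alg_add_right[of x 0 0] by simp

lemma alg_zero_left [simp]: "0 \<diamond> x = 0"
  by (metis alg_zero_right alg_comm)

lemma alg_diff_right: "x \<diamond> (y - z) = x \<diamond> y - x \<diamond> z"
  using alg_add_right[of x "y - z" z] by (simp add: algebra_simps)

lemma functional_at_vector:
  assumes "x \<noteq> 0"
  obtains \<phi> where "Vector_Spaces.linear sc (*) \<phi>" "\<phi> x = 1"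
  using dual.linear_independent_extend[of "{x}" "\<lambda>_. 1"] assms by auto

lemma functional_at_pair:
  assumes "x \<noteq> 0" and "\<nexists>c. y = c *s x"
  obtains \<phi> where "Vector_Spaces.linear sc (*) \<phi>" "\<phi> x = a" "\<phi> y = b"
proof -
  have "y \<notin> span {x}" using assms(2) by (auto simp: span_singleton)
  then have "independent {y, x}" using assms(1) by (simp add: independent_insertI)
  moreover have "y \<noteq> x" using assms(2) by (metis scale_one)
  ultimately show ?thesis
    using dual.linear_independent_extend[of "{y, x}" "\<lambda>v. if v = x then a else b"] that
    by auto
qed

end

text \<open>The symmetrised product attached to a functional phi; it is what a rank-one
  quasiderivation turns products into.\<close>
definition (in comm_algebra) symm_prod :: "('b \<Rightarrow> 'a) \<Rightarrow> 'b \<Rightarrow> 'b \<Rightarrow> 'b" where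
  "symm_prod \<phi> x y = \<phi> x *s y + \<phi> y *s x"

locale full_quasider_algebra = comm_algebra +
  assumes all_quasider: "Vector_Spaces.linear sc sc f \<Longrightarrow>
    \<exists>Q. Vector_Spaces.linear sc sc Q \<and> (\<forall>x y. Q (x \<diamond> y) = f x \<diamond> y + x \<diamond> f y)"
begin

lemma rank_one_quasider:
  assumes "Vector_Spaces.linear sc (*) \<phi>"
  obtains Q where "Vector_Spaces.linear sc sc Q" "\<And>x y. Q (x \<diamond> y) = w \<diamond> symm_prod \<phi> x y"
proof -
  obtain Q where Q: "Vector_Spaces.linear sc sc Q"
    "\<And>x y. Q (x \<diamond> y) = (\<phi> x *s w) \<diamond> y + x \<diamond> (\<phi> y *s w)"
    using all_quasider[OF endo.linear_compose_scale[OF assms]] by blast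
  have "(\<phi> x *s w) \<diamond> y + x \<diamond> (\<phi> y *s w) = w \<diamond> symm_prod \<phi> x y" for x y
    by (simp add: symm_prod_def alg_scale_left alg_scale_right alg_add_right alg_comm[of x w])
  with Q that show ?thesis by simp
qed

text \<open>A nonzero element annihilating the algebra forces the product to vanish: apply
  the companion of x |-> phi(x) x to a y, where phi(a) = 1.\<close>
lemma annihilator_forces_zero_mult:
  assumes "a \<noteq> 0" and annih: "\<And>z. a \<diamond> z = 0"
  shows "x \<diamond> y = 0"
proof -
  obtain \<phi> where \<phi>: "Vector_Spaces.linear sc (*) \<phi>" "\<phi> a = 1"
    using functional_at_vector[OF assms(1)] .
  obtain Q where Q: "Vector_Spaces.linear sc sc Q" "\<And>u v. Q (u \<diamond> v) = x \<diamond> symm_prod \<phi> u v"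
    using rank_one_quasider[OF \<phi>(1), of x] by blast
  have "x \<diamond> symm_prod \<phi> a y = Q (a \<diamond> y)" by (simp add: Q(2))
  also have "\<dots> = 0" by (simp add: annih endo.linear_0[OF Q(1)])
  finally have "x \<diamond> y + \<phi> y *s (a \<diamond> x) = 0"
    by (simp add: symm_prod_def \<phi>(2) alg_add_right alg_scale_right alg_comm[of x a])
  then show ?thesis by (simp add: annih)
qed

context
  assumes nonzero_mult: "\<exists>x y. x \<diamond> y \<noteq> 0"
begin

lemma annihilator_trivial: "(\<And>z. a \<diamond> z = 0) \<Longrightarrow> a = 0"
  using annihilator_forces_zero_mult nonzero_mult by blast

text \<open>Linear relations among products transfer to symmetrised products: applying the
  companions Q_w to the relation shows that the defect is annihilated by every w.\<close>
lemma transfer_relation: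
  assumes \<phi>: "Vector_Spaces.linear sc (*) \<phi>"
    and rel: "\<gamma> *s (x \<diamond> y) = \<alpha> *s (u \<diamond> v) + \<beta> *s (r \<diamond> s)"
  shows "\<gamma> *s symm_prod \<phi> x y = \<alpha> *s symm_prod \<phi> u v + \<beta> *s symm_prod \<phi> r s"
proof -
  let ?d = "\<gamma> *s symm_prod \<phi> x y - (\<alpha> *s symm_prod \<phi> u v + \<beta> *s symm_prod \<phi> r s)"
  have "w \<diamond> ?d = 0" for w
  proof -
    obtain Q where Q: "Vector_Spaces.linear sc sc Q" "\<And>x y. Q (x \<diamond> y) = w \<diamond> symm_prod \<phi> x y"
      using rank_one_quasider[OF \<phi>, of w] by blast
    have "\<gamma> *s Q (x \<diamond> y) = \<alpha> *s Q (u \<diamond> v) + \<beta> *s Q (r \<diamond> s)"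
      using arg_cong[OF rel, of Q] by (simp add: endo.linear_add[OF Q(1)] endo.linear_scale[OF Q(1)])
    then show ?thesis by (simp add: Q(2) alg_diff_right alg_add_right alg_scale_right)
  qed
  then have "?d = 0" using annihilator_trivial alg_comm by metis
  then show ?thesis by simp
qed

lemma transfer_zero:
  assumes "Vector_Spaces.linear sc (*) \<phi>" and "x \<diamond> y = 0"
  shows "symm_prod \<phi> x y = 0"
  using transfer_relation[OF assms(1), of 1 x y 0 x y 0 x y] assms(2) by simp

lemma transfer_eq:
  assumes "Vector_Spaces.linear sc (*) \<phi>" and "x \<diamond> y = u \<diamond> v"
  shows "symm_prod \<phi> x y = symm_prod \<phi> u v"
  using transfer_relation[OF assms(1), of 1 x y 1 u v 0 u v] assms(2) by simp

context
  assumes char_not_2: "(2::'a) \<noteq> 0"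
begin

text \<open>No zero divisors: if xy = 0 and phi(x) = 1, then y + phi(y) x = 0, which forces
  phi(y) = 0 and so y = 0.\<close>
lemma zero_divisor_free:
  assumes "x \<diamond> y = 0" and "x \<noteq> 0"
  shows "y = 0"
proof -
  obtain \<phi> where \<phi>: "Vector_Spaces.linear sc (*) \<phi>" "\<phi> x = 1"
    using functional_at_vector[OF assms(2)] .
  have "y + \<phi> y *s x = 0"
    using transfer_zero[OF \<phi>(1) assms(1)] by (simp add: symm_prod_def \<phi>(2))
  then have y: "y = (- \<phi> y) *s x"
    by (simp add: eq_neg_iff_add_eq_0 add.commute)
  have "\<phi> y = \<phi> ((- \<phi> y) *s x)"
    using y by (rule arg_cong)
  also have "\<dots> = - \<phi> y"
    using dual.linear_scale[OF \<phi>(1), of "- \<phi> y" x] by (simp only: \<phi>(2) mult_1_right)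
  finally have "\<phi> y = - \<phi> y" .
  then have "2 * \<phi> y = 0" by simp
  then show ?thesis using y char_not_2 by simp
qed

text \<open>Otherwise transferring this identity with functionals separating x and xx makes
  xx + xx = 0, contradicting the absence of zero divisors.\<close>
lemma square_in_line:
  assumes "x \<noteq> 0" and power4: "((x \<diamond> x) \<diamond> x) \<diamond> x = (x \<diamond> x) \<diamond> (x \<diamond> x)"
  obtains c where "c \<noteq> 0" "x \<diamond> x = c *s x"
proof -
  have "\<exists>c. x \<diamond> x = c *s x"
  proof (rule ccontr)
    assume not_line: "\<nexists>c. x \<diamond> x = c *s x"
    let ?x2 = "x \<diamond> x" and ?x3 = "(x \<diamond> x) \<diamond> x"
    obtain \<phi>1 where \<phi>1: "Vector_Spaces.linear sc (*) \<phi>1" "\<phi>1 x = 1" "\<phi>1 ?x2 = 0"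
      using functional_at_pair[OF assms(1) not_line] .
    obtain \<phi>2 where \<phi>2: "Vector_Spaces.linear sc (*) \<phi>2" "\<phi>2 x = 0" "\<phi>2 ?x2 = 1"
      using functional_at_pair[OF assms(1) not_line] .
    have "\<phi>1 ?x3 *s x + ?x3 = 0"
      using transfer_eq[OF \<phi>1(1) power4] by (simp add: symm_prod_def \<phi>1(2,3))
    then have "?x3 = (- \<phi>1 ?x3) *s x"
      by (simp add: eq_neg_iff_add_eq_0 add.commute)
    then have "\<phi>2 ?x3 = 0"
      using dual.linear_scale[OF \<phi>2(1)] \<phi>2(2) by (metis mult_zero_right)
    then have "?x2 + ?x2 = 0"
      using transfer_eq[OF \<phi>2(1) power4] by (simp add: symm_prod_def \<phi>2(2,3))
    then have "2 *s ?x2 = 0" by (simp add: scale_two)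
    then have "?x2 = 0" using char_not_2 by simp
    then show False using zero_divisor_free assms(1) by blast
  qed
  then obtain c where c: "x \<diamond> x = c *s x" ..
  have "c \<noteq> 0" using c assms(1) zero_divisor_free by fastforce
  with c that show ?thesis by blast
qed

context
  assumes power_assoc4: "\<And>x. ((x \<diamond> x) \<diamond> x) \<diamond> x = (x \<diamond> x) \<diamond> (x \<diamond> x)"
begin

text \<open>A nonzero idempotent spans the algebra: for y off the line through e, expanding
  (e+y)(e+y) expresses 2(ey) through ee and yy, and transferring this relation with
  phi(e) = 1, phi(y) = 0 puts y on that line after all.\<close>
lemma idempotent_spans:
  assumes idem: "e \<diamond> e = e" and "e \<noteq> 0"
  shows "\<exists>c. y = c *s e"
proof (rule ccontr)
  assume not_line: "\<nexists>c. y = c *s e"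
  then have "y \<noteq> 0" by (metis scale_zero_left)
  then obtain m where m: "m \<noteq> 0" "y \<diamond> y = m *s y"
    using square_in_line power_assoc4 by blast
  have "e + y \<noteq> 0" using not_line
    by (metis add_eq_0_iff scale_minus_left scale_one)
  then obtain \<nu> where \<nu>: "(e + y) \<diamond> (e + y) = \<nu> *s (e + y)"
    using square_in_line power_assoc4 by blast
  have "(e + y) \<diamond> (e + y) = e + (e \<diamond> y + e \<diamond> y) + m *s y"
    by (simp add: alg_add_left alg_add_right idem m(2) alg_comm[of y e] add.assoc)
  with \<nu> have "e \<diamond> y + e \<diamond> y = (\<nu> - 1) *s e + (\<nu> - m) *s y"
    by (simp add: scale_right_distrib scale_left_diff_distrib algebra_simps)
  then have "2 *s (e \<diamond> y) = (\<nu> - 1) *s e + (\<nu> - m) *s y"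
    by (simp add: scale_two)
  also have "\<dots> = (\<nu> - 1) *s (e \<diamond> e) + ((\<nu> - m) / m) *s (y \<diamond> y)"
    using m by (simp add: idem)
  finally have rel: "2 *s (e \<diamond> y) = (\<nu> - 1) *s (e \<diamond> e) + ((\<nu> - m) / m) *s (y \<diamond> y)" .
  obtain \<phi> where \<phi>: "Vector_Spaces.linear sc (*) \<phi>" "\<phi> e = 1" "\<phi> y = 0"
    using functional_at_pair[OF assms(2) not_line] .
  have "2 *s y = (\<nu> - 1) *s (e + e)"
    using transfer_relation[OF \<phi>(1) rel] by (simp add: symm_prod_def \<phi>(2,3))
  also have "\<dots> = 2 *s ((\<nu> - 1) *s e)"
    by (simp only: scale_two scale_right_distrib)
  finally have "y = (\<nu> - 1) *s e"
    using char_not_2 scale_cancel_left by blast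
  with not_line show False by blast
qed

lemma exists_idempotent: "\<exists>e. e \<noteq> 0 \<and> e \<diamond> e = e"
proof -
  obtain x y where "x \<diamond> y \<noteq> 0" using nonzero_mult by blast
  then have "x \<noteq> 0" by auto
  then obtain c where c: "c \<noteq> 0" "x \<diamond> x = c *s x"
    using square_in_line power_assoc4 by blast
  let ?e = "inverse c *s x"
  have "?e \<diamond> ?e = ?e" using c by (simp add: alg_scale_left alg_scale_right)
  moreover have "?e \<noteq> 0" using c \<open>x \<noteq> 0\<close> by simp
  ultimately show ?thesis by blast
qed

text \<open>In coordinates with respect to the idempotent the product is the field product.\<close>
lemma is_field: "is_field_alg (\<diamond>)"
proof -
  obtain e where e: "e \<noteq> 0" "e \<diamond> e = e" using exists_idempotent by blast
  have coord: "\<exists>a. v = a *s e" for v using idempotent_spans[OF e(2,1)] .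
  have mult_coord: "(a *s e) \<diamond> (b *s e) = (a * b) *s e" for a b
    by (simp add: alg_scale_left alg_scale_right e(2) mult.commute)
  have assoc: "(x \<diamond> y) \<diamond> z = x \<diamond> (y \<diamond> z)" for x y z
  proof -
    obtain a b d where "x = a *s e" "y = b *s e" "z = d *s e" using coord by meson
    then show ?thesis by (simp only: mult_coord mult.assoc)
  qed
  have unit: "e \<diamond> x = x" for x
  proof -
    obtain a where "x = a *s e" using coord by blast
    then show ?thesis using mult_coord[of 1 a] by simp
  qed
  have inverse: "\<exists>y. x \<diamond> y = e" if "x \<noteq> 0" for x
  proof -
    obtain a where a: "x = a *s e" using coord by blast
    with that have "a \<noteq> 0" by auto
    then have "x \<diamond> (inverse a *s e) = e" using a mult_coord[of a "inverse a"] by simp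
    then show ?thesis ..
  qed
  show ?thesis
    unfolding is_field_alg_def using assoc alg_comm e(1) unit inverse by (intro conjI allI exI[of _ e]) auto
qed

end
end
end
end

lemma full_quasider_algebra_of_jordan:
  assumes "jordan_algebra sc mu"
    and "\<forall>f. Vector_Spaces.linear sc sc f \<longrightarrow> quasiderivation sc mu f"
  shows "full_quasider_algebra sc mu"
proof -
  have "vector_space sc" "bilinear_mult sc mu" "\<And>x y. mu x y = mu y x"
    using assms(1) unfolding jordan_algebra_def by auto
  then interpret comm_algebra sc mu
    by unfold_locales (auto simp: bilinear_mult_def Vector_Spaces.linear_iff vector_space_def)
  show ?thesis
    using assms(2) by unfold_locales (auto simp: quasiderivation_def)
qed

lemma jordan_power_assoc4:
  assumes "jordan_algebra sc mu"
  shows "mu (mu (mu x x) x) x = mu (mu x x) (mu x x)"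
  using assms unfolding jordan_algebra_def by blast

theorem mainTheorem12:
  fixes sc :: "'k::field \<Rightarrow> 'v::ab_group_add \<Rightarrow> 'v"
    and mu :: "'v \<Rightarrow> 'v \<Rightarrow> 'v"
  assumes "(2::'k) \<noteq> 0"
    and "jordan_algebra sc mu"
    and "finite_dim sc"
    and "\<forall>f. Vector_Spaces.linear sc sc f \<longrightarrow> quasiderivation sc mu f"
  shows "is_field_alg mu \<or> zero_mult mu"
proof (cases "zero_mult mu")
  case False
  interpret full_quasider_algebra sc mu
    using full_quasider_algebra_of_jordan[OF assms(2,4)] .
  have "is_field_alg mu"
  proof (rule is_field)
    show "\<exists>x y. mu x y \<noteq> 0" using False unfolding zero_mult_def by blast
    show "(2::'k) \<noteq> 0" by (fact assms(1))
    show "mu (mu (mu x x) x) x = mu (mu x x) (mu x x)" for x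
      using jordan_power_assoc4[OF assms(2)] .
  qed
  then show ?thesis ..
qed simp

end
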